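(* Assume the Friedrichs inequality $\|w\|\le C_F\|\nabla w\|$ holds for all $w\in H^1_0$. Let $(u,p)\in H^1_0\times D$ satisfy $p=A\nabla u$ and $-\operatorname{div} p = f$ a.e. in $\Omega$, and let $(\tilde u,\tilde p)\in H^1_0\times D$ be arbitrary. Then $$\tfrac12\|\tilde p - A\nabla\tilde u\|_{A^{-1}}^2 + \|f + \operatorname{div}\tilde p\|^2 \le \|\nabla(u-\tilde u)\|_A^2 + \|p-\tilde p\|_{A^{-1}}^2 + \|\operatorname{div}(p-\tilde p)\|^2 \le 2\|\tilde p - A\nabla\tilde u\|_{A^{-1}}^2 + \Big(1+\tfrac{4C_F^2}{\alpha}\Big)\|f+\operatorname{div}\tilde p\|^2 .$$
   Context: $\Omega \subset \mathbb R^d$ ($d\ge1$) is an open domain. All function spaces are over $\mathbb C$. $L^2 = L^2(\Omega)$ (scalar or vector valued) has inner product $(x,y) = \int_\Omega x\cdot\bar y$ and norm $\|\cdot\|$. For a Hermitian-matrix valued weight $\gamma \ge 0$ in $L^\infty$, $\|v\|_\gamma^2 := (\gamma v, v)$. $H^1 = \{\varphi\in L^2 : \nabla\varphi\in L^2\}$, $D = \{\psi \in L^2(\Omega;\mathbb C^d) : \operatorname{div}\psi \in L^2\}$, and $H^1_0$ is the closure of $C_c^\infty(\Omega)$ in $H^1$. $A \in L^\infty(\Omega;\mathbb C^{d\times d})$ is pointwise Hermitian and satisfies $\alpha\|\varphi\|^2 \le (A\varphi,\varphi) \le \beta\|\varphi\|^2$ for all $\varphi\in L^2(\Omega;\mathbb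 C^d)$ with constants $0<\alpha\le\beta$; $f\in L^2$. *)

theory Defs
  imports "HOL-Analysis.Analysis"
begin

coinductive smooth_fn :: "('a::euclidean_space \<Rightarrow> 'b::real_normed_vector) \<Rightarrow> bool" where
  "(\<forall>x. f differentiable (at x)) \<Longrightarrow> (\<forall>v. smooth_fn (\<lambda>x. frechet_derivative f (at x) v))
    \<Longrightarrow> smooth_fn f"

definition test_fn :: "(real^'d) set \<Rightarrow> (real^'d \<Rightarrow> complex) \<Rightarrow> bool" where
  "test_fn \<Omega> \<phi> \<longleftrightarrow> smooth_fn \<phi> \<and> compact (closure {x. \<phi> x \<noteq> 0})
      \<and> closure {x. \<phi> x \<noteq> 0} \<subseteq> \<Omega>"

definition pderiv_fn :: "'d::finite \<Rightarrow> (real^'d \<Rightarrow> complex) \<Rightarrow> real^'d \<Rightarrow> complex" where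
  "pderiv_fn i \<phi> x = frechet_derivative \<phi> (at x) (axis i 1)"

definition cgrad :: "(real^'d \<Rightarrow> complex) \<Rightarrow> real^'d \<Rightarrow> complex^'d" where
  "cgrad \<phi> x = (\<chi> i. pderiv_fn i \<phi> x)"

definition L2 :: "(real^'d) set \<Rightarrow> (real^'d \<Rightarrow> 'b::real_normed_vector) \<Rightarrow> bool" where
  "L2 \<Omega> u \<longleftrightarrow> u \<in> borel_measurable (lebesgue_on \<Omega>)
     \<and> integrable (lebesgue_on \<Omega>) (\<lambda>x. (norm (u x))\<^sup>2)"

definition L2norm :: "(real^'d) set \<Rightarrow> (real^'d \<Rightarrow> 'b::real_normed_vector) \<Rightarrow> real" where
  "L2norm \<Omega> u = sqrt (LINT x|lebesgue_on \<Omega>. (norm (u x))\<^sup>2)"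

definition cinner :: "complex^'d \<Rightarrow> complex^'d \<Rightarrow> complex" where
  "cinner v w = (\<Sum>i\<in>UNIV. v $ i * cnj (w $ i))"

definition L2inner :: "(real^'d) set \<Rightarrow> (real^'d \<Rightarrow> complex^'d) \<Rightarrow> (real^'d \<Rightarrow> complex^'d) \<Rightarrow> complex" where
  "L2inner \<Omega> v w = (LINT x|lebesgue_on \<Omega>. cinner (v x) (w x))"

definition wnorm2 :: "(real^'d) set \<Rightarrow> (real^'d \<Rightarrow> complex^'d^'d) \<Rightarrow> (real^'d \<Rightarrow> complex^'d) \<Rightarrow> real" where
  "wnorm2 \<Omega> \<gamma> v = Re (L2inner \<Omega> (\<lambda>x. \<gamma> x *v v x) v)"

definition is_wgrad :: "(real^'d) set \<Rightarrow> (real^'d \<Rightarrow> complex) \<Rightarrow> (real^'d \<Rightarrow> complex^'d) \<Rightarrow> bool" where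
  "is_wgrad \<Omega> u g \<longleftrightarrow> (\<forall>\<phi>. test_fn \<Omega> \<phi> \<longrightarrow> (\<forall>i.
      (LINT x|lebesgue_on \<Omega>. u x * pderiv_fn i \<phi> x) = - (LINT x|lebesgue_on \<Omega>. g x $ i * \<phi> x)))"

definition is_wdiv :: "(real^'d) set \<Rightarrow> (real^'d \<Rightarrow> complex^'d) \<Rightarrow> (real^'d \<Rightarrow> complex) \<Rightarrow> bool" where
  "is_wdiv \<Omega> p q \<longleftrightarrow> (\<forall>\<phi>. test_fn \<Omega> \<phi> \<longrightarrow>
      (LINT x|lebesgue_on \<Omega>. (\<Sum>i\<in>UNIV. p x $ i * pderiv_fn i \<phi> x))
        = - (LINT x|lebesgue_on \<Omega>. q x * \<phi> x))"

definition H10 :: "(real^'d) set \<Rightarrow> (real^'d \<Rightarrow> complex) \<Rightarrow> (real^'d \<Rightarrow> complex^'d) \<Rightarrow> bool" where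
  "H10 \<Omega> u g \<longleftrightarrow> L2 \<Omega> u \<and> L2 \<Omega> g \<and> is_wgrad \<Omega> u g \<and>
     (\<exists>\<phi>. (\<forall>n. test_fn \<Omega> (\<phi> n))
        \<and> (\<lambda>n. L2norm \<Omega> (\<lambda>x. \<phi> n x - u x)) \<longlonglongrightarrow> 0
        \<and> (\<lambda>n. L2norm \<Omega> (\<lambda>x. cgrad (\<phi> n) x - g x)) \<longlonglongrightarrow> 0)"

definition Hdiv :: "(real^'d) set \<Rightarrow> (real^'d \<Rightarrow> complex^'d) \<Rightarrow> (real^'d \<Rightarrow> complex) \<Rightarrow> bool" where
  "Hdiv \<Omega> p q \<longleftrightarrow> L2 \<Omega> p \<and> L2 \<Omega> q \<and> is_wdiv \<Omega> p q"

end

theory Submission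
  imports Defs
begin

text \<open>With \<open>w = u - \<tilde>u\<close> the constitutive residual splits as \<open>\<tilde>p - A \<nabla>\<tilde>u = A \<nabla>w - (p - \<tilde>p)\<close>.
  Expanding its square in the \<open>A\<^sup>-\<^sup>1\<close>-weighted norm gives the energy error
  \<open>\<parallel>\<nabla>w\<parallel>\<^sub>A\<^sup>2 + \<parallel>p - \<tilde>p\<parallel>\<^sup>2\<close> minus the cross term \<open>2 Re (p - \<tilde>p, \<nabla>w)\<close>, which Green's formula and
  \<open>div (p - \<tilde>p) = -(f + div \<tilde>p)\<close> turn into \<open>2 Re (f + div \<tilde>p, w)\<close>; the divergence error is the
  equilibrium residual itself. The lower bound is the parallelogram inequality for the
  \<open>A\<^sup>-\<^sup>1\<close>-norm. For the upper bound the cross term is estimated by Cauchy--Schwarz, the Friedrichs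
  and Young inequalities, absorbing half of \<open>\<alpha> \<parallel>\<nabla>w\<parallel>\<^sup>2 \<le> \<parallel>\<nabla>w\<parallel>\<^sub>A\<^sup>2\<close>. All of this rests on \<open>A(x)\<close> being
  Hermitian and uniformly elliptic pointwise, which is recovered almost everywhere from the
  integral form of the ellipticity hypothesis.\<close>

section \<open>Hermitian forms on \<open>\<complex>\<^sup>n\<close>\<close>

lemma young_ineq:
  fixes x y t :: real
  assumes "t > 0"
  shows "x * y \<le> (t * x\<^sup>2 + y\<^sup>2 / t) / 2"
proof -
  have "0 \<le> (sqrt t * x - y / sqrt t)\<^sup>2" by simp
  also have "\<dots> = t * x\<^sup>2 + y\<^sup>2 / t - 2 * x * y"
    using assms by (simp add: power2_diff power_divide field_simps power2_eq_square)
  finally show ?thesis by simp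
qed

lemma norm_vec_power2: "(norm (v :: 'a::real_normed_vector^'n))\<^sup>2 = (\<Sum>i\<in>UNIV. (norm (v $ i))\<^sup>2)"
  unfolding norm_vec_def L2_set_def by (simp add: sum_nonneg)

lemma norm_mult_cnj_le_young:
  "t > 0 \<Longrightarrow> norm (a * cnj b) \<le> (t * (norm a)\<^sup>2 + (norm b)\<^sup>2 / t) / 2"
  using young_ineq[where x="norm a" and y="norm b" and t=t] by (simp add: norm_mult)

lemma norm_cinner_le_young:
  assumes "t > 0"
  shows "norm (cinner v w) \<le> (t * (norm v)\<^sup>2 + (norm w)\<^sup>2 / t) / 2"
proof -
  have "norm (cinner v w) \<le> (\<Sum>i\<in>UNIV. norm (v $ i * cnj (w $ i)))"
    unfolding cinner_def by (rule norm_sum)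
  also have "\<dots> \<le> (\<Sum>i\<in>UNIV. (t * (norm (v $ i))\<^sup>2 + (norm (w $ i))\<^sup>2 / t) / 2)"
    by (intro sum_mono norm_mult_cnj_le_young assms)
  also have "\<dots> = (t * (norm v)\<^sup>2 + (norm w)\<^sup>2 / t) / 2"
    unfolding norm_vec_power2
    by (simp add: sum_divide_distrib sum_distrib_left sum.distrib add_divide_distrib)
  finally show ?thesis .
qed

lemma cinner_commute: "cinner w v = cnj (cinner v w)"
  unfolding cinner_def by (simp add: mult.commute)

lemma cinner_diff_left: "cinner (a - b) v = cinner a v - cinner b v"
  unfolding cinner_def by (simp add: sum_subtractf left_diff_distrib)

lemma cinner_diff_right: "cinner v (a - b) = cinner v a - cinner v b"
  unfolding cinner_def by (simp add: sum_subtractf right_diff_distrib)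

lemma cinner_add_left: "cinner (a + b) v = cinner a v + cinner b v"
  unfolding cinner_def by (simp add: sum.distrib distrib_right)

lemma cinner_add_right: "cinner v (a + b) = cinner v a + cinner v b"
  unfolding cinner_def by (simp add: sum.distrib distrib_left)

lemma cinner_zero_left [simp]: "cinner 0 v = 0"
  unfolding cinner_def by simp

lemma cinner_hermitian_matrix:
  fixes B :: "complex^'n^'n"
  assumes herm: "\<forall>i j. B $ i $ j = cnj (B $ j $ i)"
  shows "cinner (B *v v) w = cinner v (B *v w)"
proof -
  have "cinner (B *v v) w = (\<Sum>i\<in>UNIV. \<Sum>j\<in>UNIV. B $ i $ j * v $ j * cnj (w $ i))"
    unfolding cinner_def matrix_vector_mult_def by (simp add: sum_distrib_right)
  also have "\<dots> = (\<Sum>j\<in>UNIV. \<Sum>i\<in>UNIV. B $ i $ j * v $ j * cnj (w $ i))"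
    by (rule sum.swap)
  also have "\<dots> = cinner v (B *v w)"
    unfolding cinner_def matrix_vector_mult_def
    by (simp add: sum_distrib_left) (intro sum.cong refl, subst herm, simp add: mult_ac)
  finally show ?thesis .
qed

lemma continuous_on_quadratic_form:
  "continuous_on UNIV (\<lambda>v. Re (cinner ((B :: complex^'n^'n) *v v) v))"
  unfolding cinner_def matrix_vector_mult_def by (simp, intro continuous_intros)

lemma matrix_inv_mult_cancel:
  fixes B :: "complex^'n^'n"
  assumes "invertible B"
  shows "B *v (matrix_inv B *v v) = v" "matrix_inv B *v (B *v v) = v"
proof -
  have "\<exists>B'. B ** B' = mat 1 \<and> B' ** B = mat 1" using assms unfolding invertible_def .
  hence "B ** matrix_inv B = mat 1 \<and> matrix_inv B ** B = mat 1"
    unfolding matrix_inv_def by (rule someI_ex)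
  thus "B *v (matrix_inv B *v v) = v" "matrix_inv B *v (B *v v) = v"
    by (simp_all add: matrix_vector_mul_assoc)
qed

locale elliptic_hermitian =
  fixes B :: "complex^'n^'n" and \<alpha> :: real
  assumes pos: "\<alpha> > 0"
    and hermitian: "\<forall>i j. B $ i $ j = cnj (B $ j $ i)"
    and elliptic: "\<forall>v. \<alpha> * (norm v)\<^sup>2 \<le> Re (cinner (B *v v) v)"
begin

lemma invertible: "invertible B"
proof -
  have "inj ((*v) B)"
  proof (rule injI)
    fix v w assume "B *v v = B *v w"
    hence "B *v (v - w) = 0" by (simp add: matrix_vector_mult_diff_distrib)
    hence "\<alpha> * (norm (v - w))\<^sup>2 \<le> 0" using elliptic[rule_format, of "v - w"] by simp
    thus "v = w" using pos by (simp add: mult_le_0_iff)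
  qed
  thus ?thesis using invertible_left_inverse matrix_left_invertible_injective by blast
qed

lemmas inv_cancel = matrix_inv_mult_cancel[OF invertible]

lemma inverse_form_lower: "\<alpha> * (norm (matrix_inv B *v v))\<^sup>2 \<le> Re (cinner (matrix_inv B *v v) v)"
  using elliptic[rule_format, of "matrix_inv B *v v"]
    cinner_hermitian_matrix[OF hermitian, of "matrix_inv B *v v" "matrix_inv B *v v"]
  by (simp add: inv_cancel)

lemma inverse_form_nonneg: "0 \<le> Re (cinner (matrix_inv B *v v) v)"
  using pos by (intro order_trans[OF _ inverse_form_lower]) simp

lemma norm_inverse_form_le: "norm (cinner (matrix_inv B *v v) v) \<le> (norm v)\<^sup>2 / \<alpha>"
proof -
  let ?w = "matrix_inv B *v v"
  have "norm (cinner ?w v) \<le> (\<alpha> * (norm ?w)\<^sup>2 + (norm v)\<^sup>2 / \<alpha>) / 2"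
    by (rule norm_cinner_le_young[OF pos])
  moreover have "\<alpha> * (norm ?w)\<^sup>2 \<le> norm (cinner ?w v)"
    using inverse_form_lower[of v] complex_Re_le_cmod[of "cinner ?w v"] by linarith
  moreover have "c \<le> b" if "c \<le> (a + b) / 2" "a \<le> c" for a b c :: real
    using that by (simp add: field_simps)
  ultimately show ?thesis by blast
qed

lemma inverse_form_image: "Re (cinner (matrix_inv B *v (B *v g)) (B *v g)) = Re (cinner (B *v g) g)"
  using cinner_commute[of g "B *v g"] by (simp add: inv_cancel)

text \<open>Parallelogram law for the form of \<open>B\<^sup>-\<^sup>1\<close>, dropping the nonnegative term at \<open>a + b\<close>.\<close>

lemma inverse_form_diff_le:
  "Re (cinner (matrix_inv B *v (a - b)) (a - b))
     \<le> 2 * Re (cinner (matrix_inv B *v a) a) + 2 * Re (cinner (matrix_inv B *v b) b)"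
proof -
  let ?Q = "\<lambda>v. cinner (matrix_inv B *v v) v"
  have "?Q (a - b) + ?Q (a + b) = 2 * ?Q a + 2 * ?Q b"
    by (simp add: matrix_vector_mult_diff_distrib matrix_vector_right_distrib cinner_diff_left
        cinner_diff_right cinner_add_left cinner_add_right)
  from arg_cong[OF this, of Re] inverse_form_nonneg[of "a + b"] show ?thesis by simp
qed

lemma inverse_form_residual:
  "Re (cinner (matrix_inv B *v (B *v g - d)) (B *v g - d))
     = Re (cinner (B *v g) g) + Re (cinner (matrix_inv B *v d) d) - 2 * Re (cinner d g)"
proof -
  have "cinner (matrix_inv B *v (B *v g - d)) (B *v g - d) = cinner (g - matrix_inv B *v d) (B *v g - d)"
    by (simp add: matrix_vector_mult_diff_distrib inv_cancel)
  also have "\<dots> = cinner g (B *v g) - cinner g d - cinner (matrix_inv B *v d) (B *v g)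
      + cinner (matrix_inv B *v d) d"
    by (simp add: cinner_diff_left cinner_diff_right)
  also have "cinner (matrix_inv B *v d) (B *v g) = cinner d g"
    using cinner_hermitian_matrix[OF hermitian, of "matrix_inv B *v d" g] by (simp add: inv_cancel)
  finally show ?thesis using cinner_commute[of g "B *v g"] cinner_commute[of g d] by simp
qed

end

section \<open>Measurability\<close>

lemma borel_measurable_vec_nth [measurable (raw)]:
  "f \<in> borel_measurable M \<Longrightarrow> (\<lambda>x. (f x :: 'a::euclidean_space^'n) $ i) \<in> borel_measurable M"
  by (rule measurable_compose[of f M borel], assumption,
      rule borel_measurable_continuous_onI, intro continuous_intros)

lemma borel_measurable_vecI:
  fixes f :: "_ \<Rightarrow> 'a::euclidean_space^'n"
  assumes "\<And>i. (\<lambda>x. f x $ i) \<in> borel_measurable M"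
  shows "f \<in> borel_measurable M"
  unfolding borel_measurable_euclidean_space[where 'c="'a^'n"]
  using assms by (auto simp: Basis_vec_def inner_axis)

lemma borel_measurable_cnj [measurable (raw)]:
  "f \<in> borel_measurable M \<Longrightarrow> (\<lambda>x. cnj (f x :: complex)) \<in> borel_measurable M"
  by (rule measurable_compose[of f M borel], assumption,
      rule borel_measurable_continuous_onI, intro continuous_intros)

lemma borel_measurable_cinner [measurable (raw)]:
  "f \<in> borel_measurable M \<Longrightarrow> g \<in> borel_measurable M \<Longrightarrow> (\<lambda>x. cinner (f x) (g x)) \<in> borel_measurable M"
  unfolding cinner_def
  by (intro borel_measurable_sum borel_measurable_times borel_measurable_cnj borel_measurable_vec_nth)

lemma borel_measurable_matrix_vector_mult [measurable (raw)]:
  fixes A :: "_ \<Rightarrow> complex^'n^'m"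
  shows "A \<in> borel_measurable M \<Longrightarrow> g \<in> borel_measurable M \<Longrightarrow> (\<lambda>x. A x *v g x) \<in> borel_measurable M"
  by (rule borel_measurable_vecI) (simp add: matrix_vector_mult_def)

lemma borel_measurable_det [measurable (raw)]:
  fixes B :: "_ \<Rightarrow> complex^'n^'n"
  shows "B \<in> borel_measurable M \<Longrightarrow> (\<lambda>x. det (B x)) \<in> borel_measurable M"
  unfolding det_def by measurable

text \<open>\<open>matrix_inv\<close> is given by Cramer's rule on invertible matrices and is a constant junk
  value elsewhere, which makes it a measurable function of the entries.\<close>

lemma matrix_inv_cramer:
  fixes B :: "complex^'n^'n"
  assumes "det B \<noteq> 0"
  shows "matrix_inv B = (\<chi> i j. det (\<chi> r s. if s = i then (if r = j then 1 else 0) else B $ r $ s) / det B)"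
proof -
  have inv: "invertible B" using assms invertible_det_nz by blast
  have "matrix_inv B $ i $ j = det (\<chi> r s. if s = i then (if r = j then 1 else 0) else B $ r $ s) / det B"
    for i j
  proof -
    have "matrix_inv B *v axis j 1
        = (\<chi> k. det (\<chi> r s. if s = k then (axis j 1 :: complex^'n) $ r else B $ r $ s) / det B)"
      using cramer[OF assms] matrix_inv_mult_cancel(1)[OF inv] by blast
    moreover have "(matrix_inv B *v axis j 1) $ i = matrix_inv B $ i $ j"
      unfolding matrix_vector_mult_def axis_def by (simp add: if_distrib cong: if_cong)
    moreover have "(\<chi> r s. if s = i then (axis j 1 :: complex^'n) $ r else B $ r $ s)
        = (\<chi> r s. if s = i then (if r = j then 1 else 0) else B $ r $ s)"
      by (simp add: axis_def vec_eq_iff)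
    ultimately show ?thesis by simp
  qed
  thus ?thesis by (simp add: vec_eq_iff)
qed

lemma matrix_inv_not_invertible:
  fixes B :: "complex^'n^'n"
  assumes "\<not> invertible B"
  shows "matrix_inv B = (SOME B'::complex^'n^'n. False)"
  using assms unfolding invertible_def matrix_inv_def by metis

lemma borel_measurable_matrix_inv [measurable (raw)]:
  fixes A :: "_ \<Rightarrow> complex^'n^'n"
  assumes A: "A \<in> borel_measurable M"
  shows "(\<lambda>x. matrix_inv (A x)) \<in> borel_measurable M"
proof -
  define C where "C x = (\<chi> i j. det (\<chi> r s. if s = i then (if r = j then 1 else 0) else A x $ r $ s)
    / det (A x) :: complex^'n^'n)" for x
  have eq: "(\<lambda>x. matrix_inv (A x)) = (\<lambda>x. if det (A x) = 0 then (SOME B'::complex^'n^'n. False) else C x)"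
    by (rule ext) (simp add: C_def matrix_inv_cramer matrix_inv_not_invertible invertible_det_nz)
  have "C \<in> borel_measurable M"
  proof (intro borel_measurable_vecI)
    fix i j
    have "(\<lambda>x. (\<chi> r s. if s = i then (if r = j then 1 else 0) else A x $ r $ s) :: complex^'n^'n)
        \<in> borel_measurable M"
    proof (intro borel_measurable_vecI)
      fix r s
      show "(\<lambda>x. (\<chi> r s. if s = i then (if r = j then 1 else 0) else A x $ r $ s) $ r $ s)
          \<in> borel_measurable M"
        by (cases "s = i") (auto intro!: borel_measurable_vec_nth A)
    qed
    thus "(\<lambda>x. C x $ i $ j) \<in> borel_measurable M"
      unfolding C_def by (simp add: borel_measurable_divide borel_measurable_det A)
  qed
  moreover have "{x \<in> space M. det (A x) = 0} \<in> sets M"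
    by (rule measurable_equality_set) (auto intro: borel_measurable_det A)
  ultimately show ?thesis unfolding eq by (intro measurable_If) auto
qed

section \<open>Square-integrable functions\<close>

lemma L2norm_nonneg: "0 \<le> L2norm \<Omega> f"
  unfolding L2norm_def by simp

lemma L2norm_power2: "(L2norm \<Omega> f)\<^sup>2 = (LINT x|lebesgue_on \<Omega>. (norm (f x))\<^sup>2)"
  unfolding L2norm_def by (simp add: integral_nonneg_AE)

lemma L2_borel_measurable: "L2 \<Omega> f \<Longrightarrow> f \<in> borel_measurable (lebesgue_on \<Omega>)"
  unfolding L2_def by simp

lemma power2_norm_add_le: "(norm (a + b :: 'a::real_normed_vector))\<^sup>2 \<le> 2 * (norm a)\<^sup>2 + 2 * (norm b)\<^sup>2"
proof -
  have "(norm (a + b))\<^sup>2 \<le> (norm a + norm b)\<^sup>2" by (simp add: norm_triangle_ineq power_mono)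
  also have "\<dots> \<le> 2 * (norm a)\<^sup>2 + 2 * (norm b)\<^sup>2"
    using zero_le_power2[of "norm a - norm b"] unfolding power2_diff power2_sum by linarith
  finally show ?thesis .
qed

lemma power2_norm_diff_le: "(norm (a - b :: 'a::real_normed_vector))\<^sup>2 \<le> 2 * (norm a)\<^sup>2 + 2 * (norm b)\<^sup>2"
  using power2_norm_add_le[of a "- b"] by simp

lemma L2_bound:
  assumes "L2 \<Omega> g" "f \<in> borel_measurable (lebesgue_on \<Omega>)"
    and "AE x in lebesgue_on \<Omega>. (norm (f x))\<^sup>2 \<le> C * (norm (g x))\<^sup>2"
  shows "L2 \<Omega> f"
  unfolding L2_def
proof
  show "integrable (lebesgue_on \<Omega>) (\<lambda>x. (norm (f x))\<^sup>2)"
    by (rule Bochner_Integration.integrable_bound[where f = "\<lambda>x. C * (norm (g x))\<^sup>2"])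
       (use assms in \<open>auto simp: L2_def\<close>)
qed (rule assms)

lemma L2_add_bound:
  assumes "L2 \<Omega> f" "L2 \<Omega> g" "h \<in> borel_measurable (lebesgue_on \<Omega>)"
    and "\<And>x. (norm (h x))\<^sup>2 \<le> 2 * (norm (f x))\<^sup>2 + 2 * (norm (g x))\<^sup>2"
  shows "L2 \<Omega> h"
  unfolding L2_def
proof
  show "integrable (lebesgue_on \<Omega>) (\<lambda>x. (norm (h x))\<^sup>2)"
    by (rule Bochner_Integration.integrable_bound[where f="\<lambda>x. 2 * (norm (f x))\<^sup>2 + 2 * (norm (g x))\<^sup>2"])
       (use assms in \<open>auto simp: L2_def\<close>)
qed (rule assms)

lemma L2_diff:
  fixes f g :: "_ \<Rightarrow> 'b::{real_normed_vector, second_countable_topology}"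
  assumes "L2 \<Omega> f" "L2 \<Omega> g"
  shows "L2 \<Omega> (\<lambda>x. f x - g x)"
  using assms by (intro L2_add_bound[OF assms] power2_norm_diff_le) (auto simp: L2_def)

lemma L2_add:
  fixes f g :: "_ \<Rightarrow> 'b::{real_normed_vector, second_countable_topology}"
  assumes "L2 \<Omega> f" "L2 \<Omega> g"
  shows "L2 \<Omega> (\<lambda>x. f x + g x)"
  using assms by (intro L2_add_bound[OF assms] power2_norm_add_le) (auto simp: L2_def)

lemma L2_vec_nth:
  fixes f :: "_ \<Rightarrow> 'b::euclidean_space^'n"
  assumes "L2 \<Omega> f"
  shows "L2 \<Omega> (\<lambda>x. f x $ i)"
  by (rule L2_bound[OF assms, where C = 1])
     (use assms in \<open>auto simp: L2_def intro!: power_mono Finite_Cartesian_Product.norm_nth_le\<close>)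

lemma norm_matrix_vector_mult_le:
  fixes A :: "complex^'n^'m"
  shows "norm (A *v v) \<le> real CARD('m) * real CARD('n) * norm A * norm v"
proof -
  have "norm ((A *v v) $ i) \<le> real CARD('n) * (norm A * norm v)" for i
  proof -
    have "norm ((A *v v) $ i) \<le> (\<Sum>j\<in>UNIV. norm (A $ i $ j * v $ j))"
      unfolding matrix_vector_mult_def by (simp add: norm_sum)
    also have "\<dots> \<le> (\<Sum>j\<in>(UNIV::'n set). norm A * norm v)"
    proof (rule sum_mono)
      fix j
      have "norm (A $ i $ j) \<le> norm A"
        using Finite_Cartesian_Product.norm_nth_le[of "A $ i" j] Finite_Cartesian_Product.norm_nth_le[of A i]
        by linarith
      thus "norm (A $ i $ j * v $ j) \<le> norm A * norm v"
        unfolding norm_mult by (intro mult_mono Finite_Cartesian_Product.norm_nth_le) auto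
    qed
    finally show ?thesis by simp
  qed
  hence "(\<Sum>i\<in>UNIV. norm ((A *v v) $ i)) \<le> (\<Sum>i\<in>(UNIV::'m set). real CARD('n) * (norm A * norm v))"
    by (rule sum_mono)
  moreover have "norm (A *v v) \<le> (\<Sum>i\<in>UNIV. norm ((A *v v) $ i))"
    unfolding norm_vec_def by (rule L2_set_le_sum) simp
  ultimately show ?thesis by (simp add: mult_ac)
qed

lemma L2_matrix_vector_mult:
  fixes A :: "real^'d \<Rightarrow> complex^'n^'m"
  assumes "A \<in> borel_measurable (lebesgue_on \<Omega>)" and "AE x in lebesgue_on \<Omega>. norm (A x) \<le> K"
    and g: "L2 \<Omega> g"
  shows "L2 \<Omega> (\<lambda>x. A x *v g x)"
proof (rule L2_bound[OF g])
  show "(\<lambda>x. A x *v g x) \<in> borel_measurable (lebesgue_on \<Omega>)"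
    using assms by (auto simp: L2_def)
  let ?c = "real CARD('m) * real CARD('n)"
  show "AE x in lebesgue_on \<Omega>. (norm (A x *v g x))\<^sup>2 \<le> (?c * K)\<^sup>2 * (norm (g x))\<^sup>2"
    using assms(2)
  proof eventually_elim
    case (elim x)
    have "norm (A x *v g x) \<le> ?c * norm (A x) * norm (g x)" by (rule norm_matrix_vector_mult_le)
    also have "\<dots> \<le> ?c * K * norm (g x)" using elim by (intro mult_right_mono mult_left_mono) auto
    finally have "(norm (A x *v g x))\<^sup>2 \<le> (?c * K * norm (g x))\<^sup>2" by (intro power_mono) auto
    thus ?case by (simp add: power_mult_distrib)
  qed
qed

text \<open>Young's inequality optimized over its parameter; this is the route to the
  Cauchy--Schwarz inequality for \<open>L\<^sup>2\<close> integrals below.\<close>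

lemma le_mult_if_young_bound:
  fixes a b X :: real
  assumes a: "a \<ge> 0" and b: "b \<ge> 0" and young: "\<And>t. t > 0 \<Longrightarrow> X \<le> (t * a\<^sup>2 + b\<^sup>2 / t) / 2"
  shows "X \<le> a * b"
proof (rule field_le_epsilon)
  fix e :: real assume "e > 0"
  define \<epsilon> where "\<epsilon> = e / (a + b + 1)"
  have "\<epsilon> > 0" using \<open>e > 0\<close> a b by (simp add: \<epsilon>_def)
  have "X \<le> ((b + \<epsilon>) / (a + \<epsilon>) * a\<^sup>2 + b\<^sup>2 / ((b + \<epsilon>) / (a + \<epsilon>))) / 2"
    using young[of "(b + \<epsilon>) / (a + \<epsilon>)"] \<open>\<epsilon> > 0\<close> a b by simp
  also have "(b + \<epsilon>) / (a + \<epsilon>) * a\<^sup>2 \<le> (b + \<epsilon>) * a"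
    using \<open>\<epsilon> > 0\<close> a b by (simp add: power2_eq_square divide_le_eq mult_left_mono mult_right_mono)
  also have "b\<^sup>2 / ((b + \<epsilon>) / (a + \<epsilon>)) \<le> b * (a + \<epsilon>)"
    using \<open>\<epsilon> > 0\<close> a b mult_left_mono[of b "b + \<epsilon>" "b * (a + \<epsilon>)"]
    by (simp add: power2_eq_square divide_le_eq mult_ac)
  also have "((b + \<epsilon>) * a + b * (a + \<epsilon>)) / 2 = a * b + \<epsilon> * (a + b) / 2"
    by (simp add: field_simps)
  also have "\<epsilon> * (a + b) / 2 \<le> e"
    using \<open>e > 0\<close> a b by (simp add: \<epsilon>_def field_simps)
  finally show "X \<le> a * b + e" by simp
qed

lemma norm_integral_le_L2norm_mult:
  fixes F :: "_ \<Rightarrow> 'b::{banach, second_countable_topology}"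
  assumes f: "L2 \<Omega> f" and g: "L2 \<Omega> g" and F: "F \<in> borel_measurable (lebesgue_on \<Omega>)"
    and young: "\<And>t x. t > 0 \<Longrightarrow> norm (F x) \<le> (t * (norm (f x))\<^sup>2 + (norm (g x))\<^sup>2 / t) / 2"
  shows "integrable (lebesgue_on \<Omega>) F"
    and "norm (LINT x|lebesgue_on \<Omega>. F x) \<le> L2norm \<Omega> f * L2norm \<Omega> g"
proof -
  have bound: "integrable (lebesgue_on \<Omega>) (\<lambda>x. (t * (norm (f x))\<^sup>2 + (norm (g x))\<^sup>2 / t) / 2)" for t
    using f g by (auto simp: L2_def)
  show iF: "integrable (lebesgue_on \<Omega>) F"
    by (rule Bochner_Integration.integrable_bound[OF bound[of 1] F]) (use young[of 1] in auto)
  show "norm (LINT x|lebesgue_on \<Omega>. F x) \<le> L2norm \<Omega> f * L2norm \<Omega> g"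
  proof (rule le_mult_if_young_bound[OF L2norm_nonneg L2norm_nonneg])
    fix t :: real assume "t > 0"
    have "norm (LINT x|lebesgue_on \<Omega>. F x) \<le> (LINT x|lebesgue_on \<Omega>. norm (F x))"
      by (rule integral_norm_bound)
    also have "\<dots> \<le> (LINT x|lebesgue_on \<Omega>. (t * (norm (f x))\<^sup>2 + (norm (g x))\<^sup>2 / t) / 2)"
      by (intro integral_mono integrable_norm iF bound young \<open>t > 0\<close>)
    also have "\<dots> = (t * (L2norm \<Omega> f)\<^sup>2 + (L2norm \<Omega> g)\<^sup>2 / t) / 2"
      using f g unfolding L2norm_power2 L2_def by simp
    finally show "norm (LINT x|lebesgue_on \<Omega>. F x) \<le> (t * (L2norm \<Omega> f)\<^sup>2 + (L2norm \<Omega> g)\<^sup>2 / t) / 2" .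
  qed
qed

lemma
  assumes "L2 \<Omega> f" "L2 \<Omega> g"
  shows integrable_cinner: "integrable (lebesgue_on \<Omega>) (\<lambda>x. cinner (f x) (g x))"
    and norm_L2inner_le: "norm (L2inner \<Omega> f g) \<le> L2norm \<Omega> f * L2norm \<Omega> g"
proof -
  have "(\<lambda>x. cinner (f x) (g x)) \<in> borel_measurable (lebesgue_on \<Omega>)"
    using assms by (intro borel_measurable_cinner L2_borel_measurable)
  from norm_integral_le_L2norm_mult[OF assms this norm_cinner_le_young]
  show "integrable (lebesgue_on \<Omega>) (\<lambda>x. cinner (f x) (g x))"
    and "norm (L2inner \<Omega> f g) \<le> L2norm \<Omega> f * L2norm \<Omega> g"
    unfolding L2inner_def by blast+
qed

lemma
  fixes f g :: "_ \<Rightarrow> complex"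
  assumes "L2 \<Omega> f" "L2 \<Omega> g"
  shows integrable_mult_cnj: "integrable (lebesgue_on \<Omega>) (\<lambda>x. f x * cnj (g x))"
    and norm_integral_mult_cnj_le:
      "norm (LINT x|lebesgue_on \<Omega>. f x * cnj (g x)) \<le> L2norm \<Omega> f * L2norm \<Omega> g"
proof -
  have "(\<lambda>x. f x * cnj (g x)) \<in> borel_measurable (lebesgue_on \<Omega>)"
    using assms by (intro borel_measurable_times borel_measurable_cnj L2_borel_measurable)
  from norm_integral_le_L2norm_mult[OF assms this norm_mult_cnj_le_young]
  show "integrable (lebesgue_on \<Omega>) (\<lambda>x. f x * cnj (g x))"
    and "norm (LINT x|lebesgue_on \<Omega>. f x * cnj (g x)) \<le> L2norm \<Omega> f * L2norm \<Omega> g"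
    by blast+
qed

lemma integrable_mult_L2:
  fixes f g :: "_ \<Rightarrow> complex"
  assumes "L2 \<Omega> f" "L2 \<Omega> g"
  shows "integrable (lebesgue_on \<Omega>) (\<lambda>x. f x * g x)"
proof -
  have "L2 \<Omega> (\<lambda>x. cnj (g x))" using assms(2) by (simp add: L2_def borel_measurable_cnj)
  from integrable_mult_cnj[OF assms(1) this] show ?thesis by simp
qed

lemma L2norm_diff_power2_le:
  fixes a b :: "_ \<Rightarrow> 'b::{real_normed_vector, second_countable_topology}"
  assumes "L2 \<Omega> a" "L2 \<Omega> b"
  shows "(L2norm \<Omega> (\<lambda>x. a x - b x))\<^sup>2 \<le> 2 * (L2norm \<Omega> a)\<^sup>2 + 2 * (L2norm \<Omega> b)\<^sup>2"
proof -
  have "(LINT x|lebesgue_on \<Omega>. (norm (a x - b x))\<^sup>2)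
      \<le> (LINT x|lebesgue_on \<Omega>. 2 * (norm (a x))\<^sup>2 + 2 * (norm (b x))\<^sup>2)"
    using L2_diff[OF assms] assms unfolding L2_def by (intro integral_mono power2_norm_diff_le) auto
  thus ?thesis using assms unfolding L2norm_power2 L2_def by simp
qed

lemma L2norm_diff_tendsto_0:
  fixes a b :: "nat \<Rightarrow> _ \<Rightarrow> 'b::{real_normed_vector, second_countable_topology}"
  assumes "(\<lambda>n. L2norm \<Omega> (a n)) \<longlonglongrightarrow> 0" "(\<lambda>n. L2norm \<Omega> (b n)) \<longlonglongrightarrow> 0"
    and "\<And>n. L2 \<Omega> (a n)" "\<And>n. L2 \<Omega> (b n)"
  shows "(\<lambda>n. L2norm \<Omega> (\<lambda>x. a n x - b n x)) \<longlonglongrightarrow> 0"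
proof (rule Lim_null_comparison)
  show "\<forall>\<^sub>F n in sequentially. norm (L2norm \<Omega> (\<lambda>x. a n x - b n x))
      \<le> sqrt (2 * (L2norm \<Omega> (a n))\<^sup>2 + 2 * (L2norm \<Omega> (b n))\<^sup>2)"
    using L2norm_diff_power2_le[OF assms(3,4)]
    by (intro always_eventually allI) (simp add: L2norm_nonneg real_le_rsqrt)
  have "(\<lambda>n. sqrt (2 * (L2norm \<Omega> (a n))\<^sup>2 + 2 * (L2norm \<Omega> (b n))\<^sup>2)) \<longlonglongrightarrow> sqrt (2 * 0\<^sup>2 + 2 * 0\<^sup>2)"
    by (intro tendsto_intros assms(1,2))
  thus "(\<lambda>n. sqrt (2 * (L2norm \<Omega> (a n))\<^sup>2 + 2 * (L2norm \<Omega> (b n))\<^sup>2)) \<longlonglongrightarrow> 0" by simp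
qed

section \<open>Test functions\<close>

lemma frechet_derivative_bounded_linear_pair:
  assumes "bounded_linear L" "f differentiable at x" "g differentiable at x"
  shows "((\<lambda>x. L (f x, g x)) has_derivative
      (\<lambda>v. L (frechet_derivative f (at x) v, frechet_derivative g (at x) v))) (at x)"
  using assms
  by (intro bounded_linear.has_derivative[OF assms(1)] has_derivative_Pair)
     (auto simp: frechet_derivative_works[symmetric])

lemma smooth_fn_bounded_linear_pair:
  assumes L: "bounded_linear L" and "smooth_fn f" "smooth_fn g"
  shows "smooth_fn (\<lambda>x. L (f x, g x))"
proof (rule smooth_fn.coinduct[where X = "\<lambda>h. \<exists>f g. smooth_fn f \<and> smooth_fn g \<and> h = (\<lambda>x. L (f x, g x))"])
  show "\<exists>f' g'. smooth_fn f' \<and> smooth_fn g' \<and> (\<lambda>x. L (f x, g x)) = (\<lambda>x. L (f' x, g' x))"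
    using assms by blast
next
  fix h assume "\<exists>f g. smooth_fn f \<and> smooth_fn g \<and> h = (\<lambda>x. L (f x, g x))"
  then obtain f g where h: "h = (\<lambda>x. L (f x, g x))" and "smooth_fn f" "smooth_fn g" by blast
  hence f: "\<forall>x. f differentiable at x" "\<forall>v. smooth_fn (\<lambda>x. frechet_derivative f (at x) v)"
    and g: "\<forall>x. g differentiable at x" "\<forall>v. smooth_fn (\<lambda>x. frechet_derivative g (at x) v)"
    by (auto elim: smooth_fn.cases)
  have D: "(h has_derivative
      (\<lambda>v. L (frechet_derivative f (at x) v, frechet_derivative g (at x) v))) (at x)" for x
    unfolding h using f g by (intro frechet_derivative_bounded_linear_pair L) auto
  have "(\<lambda>x. frechet_derivative h (at x) v)
      = (\<lambda>x. L (frechet_derivative f (at x) v, frechet_derivative g (at x) v))" for v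
    by (simp add: D[THEN frechet_derivative_at, symmetric])
  hence "\<forall>v. \<exists>f' g'. smooth_fn f' \<and> smooth_fn g' \<and> (\<lambda>x. frechet_derivative h (at x) v) = (\<lambda>x. L (f' x, g' x))"
    using f(2) g(2) by blast
  moreover have "\<forall>x. h differentiable at x" using D differentiable_def by blast
  ultimately show "\<exists>f. h = f \<and> (\<forall>x. f differentiable at x) \<and> (\<forall>v.
      (\<exists>f' g'. smooth_fn f' \<and> smooth_fn g' \<and> (\<lambda>x. frechet_derivative f (at x) v) = (\<lambda>x. L (f' x, g' x)))
      \<or> smooth_fn (\<lambda>x. frechet_derivative f (at x) v))"
    by blast
qed

lemma smooth_fn_diff: "smooth_fn f \<Longrightarrow> smooth_fn g \<Longrightarrow> smooth_fn (\<lambda>x. f x - g x)"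
  using smooth_fn_bounded_linear_pair[of "\<lambda>p. fst p - snd p" f g]
  by (simp add: bounded_linear_sub bounded_linear_fst bounded_linear_snd)

lemma smooth_fn_cnj: "smooth_fn f \<Longrightarrow> smooth_fn (\<lambda>x. cnj (f x))"
  using smooth_fn_bounded_linear_pair[of "\<lambda>p. cnj (fst p)" f f]
  by (simp add: bounded_linear_compose[OF bounded_linear_cnj bounded_linear_fst])

lemma smooth_fn_differentiable: "smooth_fn f \<Longrightarrow> f differentiable at x"
  by (auto elim: smooth_fn.cases)

lemma smooth_fn_pderiv: "smooth_fn \<phi> \<Longrightarrow> smooth_fn (pderiv_fn i \<phi>)"
  unfolding pderiv_fn_def[abs_def] by (auto elim: smooth_fn.cases)

lemma smooth_fn_continuous_on: "smooth_fn f \<Longrightarrow> continuous_on S f"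
  by (intro differentiable_imp_continuous_on differentiable_at_imp_differentiable_on
      smooth_fn_differentiable)

lemma pderiv_fn_bounded_linear_pair:
  assumes "bounded_linear L" "smooth_fn \<phi>" "smooth_fn \<psi>"
  shows "pderiv_fn i (\<lambda>x. L (\<phi> x, \<psi> x)) x = L (pderiv_fn i \<phi> x, pderiv_fn i \<psi> x)"
  unfolding pderiv_fn_def
  by (simp add: frechet_derivative_at[OF frechet_derivative_bounded_linear_pair[OF assms(1)
      smooth_fn_differentiable[OF assms(2)] smooth_fn_differentiable[OF assms(3)]], symmetric])

lemma cgrad_diff:
  assumes "smooth_fn \<phi>" "smooth_fn \<psi>"
  shows "cgrad (\<lambda>x. \<phi> x - \<psi> x) x = cgrad \<phi> x - cgrad \<psi> x"
  using pderiv_fn_bounded_linear_pair[of "\<lambda>p. fst p - snd p", OF _ assms]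
  by (simp add: cgrad_def vec_eq_iff bounded_linear_sub bounded_linear_fst bounded_linear_snd)

lemma pderiv_fn_cnj:
  assumes "smooth_fn \<phi>"
  shows "pderiv_fn i (\<lambda>x. cnj (\<phi> x)) x = cnj (pderiv_fn i \<phi> x)"
  using pderiv_fn_bounded_linear_pair[of "\<lambda>p. cnj (fst p)", OF _ assms assms]
  by (simp add: bounded_linear_compose[OF bounded_linear_cnj bounded_linear_fst])

lemma test_fn_smooth: "test_fn \<Omega> \<phi> \<Longrightarrow> smooth_fn \<phi>"
  unfolding test_fn_def by simp

lemma test_fn_diff:
  assumes "test_fn \<Omega> \<phi>" "test_fn \<Omega> \<psi>"
  shows "test_fn \<Omega> (\<lambda>x. \<phi> x - \<psi> x)"
proof -
  have sub: "{x. \<phi> x - \<psi> x \<noteq> 0} \<subseteq> {x. \<phi> x \<noteq> 0} \<union> {x. \<psi> x \<noteq> 0}" by auto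
  have "bounded ({x. \<phi> x \<noteq> 0} \<union> {x. \<psi> x \<noteq> 0})"
    using assms unfolding test_fn_def
    by (meson bounded_Un bounded_closure_image bounded_subset closure_subset compact_imp_bounded)
  hence "compact (closure {x. \<phi> x - \<psi> x \<noteq> 0})"
    using bounded_subset[OF _ sub] by (simp only: compact_closure)
  moreover have "closure {x. \<phi> x - \<psi> x \<noteq> 0} \<subseteq> \<Omega>"
    using assms closure_mono[OF sub] unfolding test_fn_def by auto
  ultimately show ?thesis
    using assms unfolding test_fn_def by (simp add: smooth_fn_diff)
qed

lemma test_fn_cnj: "test_fn \<Omega> \<phi> \<Longrightarrow> test_fn \<Omega> (\<lambda>x. cnj (\<phi> x))"
  unfolding test_fn_def by (auto intro: smooth_fn_cnj)

lemma pderiv_fn_outside_support: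
  assumes "x \<notin> closure {x. \<phi> x \<noteq> 0}"
  shows "pderiv_fn i \<phi> x = 0"
proof -
  have "(\<phi> has_derivative (\<lambda>_. 0)) (at x)"
  proof (rule has_derivative_transform_within_open[OF has_derivative_const])
    show "open (- closure {x. \<phi> x \<noteq> 0})" by (simp add: open_Compl)
    show "0 = \<phi> y" if "y \<in> - closure {x. \<phi> x \<noteq> 0}" for y
      using that closure_subset[of "{x. \<phi> x \<noteq> 0}"] by auto
  qed (use assms in auto)
  thus ?thesis unfolding pderiv_fn_def by (simp add: frechet_derivative_at[symmetric])
qed

lemma L2_continuous_compact_support:
  fixes h :: "real^'d \<Rightarrow> 'b::{real_normed_vector, second_countable_topology}"
  assumes cont: "continuous_on UNIV h" and K: "compact K" and out: "\<And>x. x \<notin> K \<Longrightarrow> h x = 0"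
    and \<Omega>: "\<Omega> \<in> sets lebesgue"
  shows "L2 \<Omega> h"
  unfolding L2_def
proof
  show m: "h \<in> borel_measurable (lebesgue_on \<Omega>)"
    by (rule continuous_imp_measurable_on_sets_lebesgue[OF continuous_on_subset[OF cont subset_UNIV] \<Omega>])
  obtain B where B: "\<And>x. x \<in> K \<Longrightarrow> norm (h x) \<le> B"
    using compact_imp_bounded[OF compact_continuous_image[OF continuous_on_subset[OF cont subset_UNIV] K]]
    unfolding bounded_iff by auto
  have "integrable lebesgue (\<lambda>x. indicat_real \<Omega> x *\<^sub>R (B\<^sup>2 * indicat_real K x))"
    using \<Omega> lmeasurable_compact[OF K] lmeasurable_iff_integrable
    by (intro integrable_mult_indicator integrable_mult_right) auto
  hence "integrable (lebesgue_on \<Omega>) (\<lambda>x. B\<^sup>2 * indicat_real K x)"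
    using \<Omega> by (subst integrable_restrict_space) auto
  thus "integrable (lebesgue_on \<Omega>) (\<lambda>x. (norm (h x))\<^sup>2)"
  proof (rule Bochner_Integration.integrable_bound)
    show "(\<lambda>x. (norm (h x))\<^sup>2) \<in> borel_measurable (lebesgue_on \<Omega>)" using m by simp
    show "AE x in lebesgue_on \<Omega>. norm ((norm (h x))\<^sup>2) \<le> norm (B\<^sup>2 * indicat_real K x)"
      using B out by (intro AE_I2) (auto simp: indicator_def intro!: power_mono)
  qed
qed

lemma L2_test_fn:
  assumes "test_fn \<Omega> \<phi>" "\<Omega> \<in> sets lebesgue"
  shows "L2 \<Omega> \<phi>"
proof (rule L2_continuous_compact_support[where K = "closure {x. \<phi> x \<noteq> 0}"])
  show "\<phi> x = 0" if "x \<notin> closure {x. \<phi> x \<noteq> 0}" for x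
    using that closure_subset[of "{x. \<phi> x \<noteq> 0}"] by auto
qed (use assms smooth_fn_continuous_on in \<open>auto simp: test_fn_def\<close>)

lemma L2_cgrad_test_fn:
  assumes "test_fn \<Omega> \<phi>" "\<Omega> \<in> sets lebesgue"
  shows "L2 \<Omega> (cgrad \<phi>)"
proof (rule L2_continuous_compact_support[where K = "closure {x. \<phi> x \<noteq> 0}"])
  show "continuous_on UNIV (cgrad \<phi>)"
    unfolding cgrad_def[abs_def] using assms
    by (intro continuous_on_vec_lambda smooth_fn_continuous_on smooth_fn_pderiv test_fn_smooth)
  show "cgrad \<phi> x = 0" if "x \<notin> closure {x. \<phi> x \<noteq> 0}" for x
    using pderiv_fn_outside_support[OF that] by (simp add: cgrad_def vec_eq_iff)
qed (use assms in \<open>auto simp: test_fn_def\<close>)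

lemma L2_pderiv_fn_test_fn:
  assumes "test_fn \<Omega> \<phi>" "\<Omega> \<in> sets lebesgue"
  shows "L2 \<Omega> (pderiv_fn i \<phi>)"
  using L2_vec_nth[OF L2_cgrad_test_fn[OF assms], of i] by (simp add: cgrad_def)

section \<open>The spaces \<open>H\<^sup>1\<^sub>0\<close> and \<open>D\<close>\<close>

lemma is_wgrad_diff:
  assumes \<Omega>: "\<Omega> \<in> sets lebesgue" and L2: "L2 \<Omega> u" "L2 \<Omega> v" "L2 \<Omega> g" "L2 \<Omega> h"
    and "is_wgrad \<Omega> u g" "is_wgrad \<Omega> v h"
  shows "is_wgrad \<Omega> (\<lambda>x. u x - v x) (\<lambda>x. g x - h x)"
  unfolding is_wgrad_def
proof (intro allI impI)
  fix \<zeta> i assume \<zeta>: "test_fn \<Omega> \<zeta>"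
  note int = integrable_mult_L2[OF _ L2_pderiv_fn_test_fn[OF \<zeta> \<Omega>]]
    integrable_mult_L2[OF L2_vec_nth _, OF _ L2_test_fn[OF \<zeta> \<Omega>]]
  have "(LINT x|lebesgue_on \<Omega>. (u x - v x) * pderiv_fn i \<zeta> x)
      = (LINT x|lebesgue_on \<Omega>. u x * pderiv_fn i \<zeta> x) - (LINT x|lebesgue_on \<Omega>. v x * pderiv_fn i \<zeta> x)"
    using int(1)[OF L2(1)] int(1)[OF L2(2)] by (simp add: left_diff_distrib)
  also have "\<dots> = (LINT x|lebesgue_on \<Omega>. h x $ i * \<zeta> x) - (LINT x|lebesgue_on \<Omega>. g x $ i * \<zeta> x)"
    using assms(6,7) \<zeta> unfolding is_wgrad_def by simp
  also have "\<dots> = - (LINT x|lebesgue_on \<Omega>. (g x - h x) $ i * \<zeta> x)"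
    using int(2)[OF L2(3)] int(2)[OF L2(4)] by (simp add: left_diff_distrib)
  finally show "(LINT x|lebesgue_on \<Omega>. (u x - v x) * pderiv_fn i \<zeta> x)
      = - (LINT x|lebesgue_on \<Omega>. (g x - h x) $ i * \<zeta> x)" .
qed

lemma H10_diff:
  assumes \<Omega>: "\<Omega> \<in> sets lebesgue" and u: "H10 \<Omega> u g" and v: "H10 \<Omega> v h"
  shows "H10 \<Omega> (\<lambda>x. u x - v x) (\<lambda>x. g x - h x)"
proof -
  from u obtain \<phi> where \<phi>: "\<And>n. test_fn \<Omega> (\<phi> n)" "(\<lambda>n. L2norm \<Omega> (\<lambda>x. \<phi> n x - u x)) \<longlonglongrightarrow> 0"
    "(\<lambda>n. L2norm \<Omega> (\<lambda>x. cgrad (\<phi> n) x - g x)) \<longlonglongrightarrow> 0" unfolding H10_def by blast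
  from v obtain \<psi> where \<psi>: "\<And>n. test_fn \<Omega> (\<psi> n)" "(\<lambda>n. L2norm \<Omega> (\<lambda>x. \<psi> n x - v x)) \<longlonglongrightarrow> 0"
    "(\<lambda>n. L2norm \<Omega> (\<lambda>x. cgrad (\<psi> n) x - h x)) \<longlonglongrightarrow> 0" unfolding H10_def by blast
  have L2: "L2 \<Omega> u" "L2 \<Omega> v" "L2 \<Omega> g" "L2 \<Omega> h" using u v unfolding H10_def by auto
  have "(\<lambda>n. L2norm \<Omega> (\<lambda>x. (\<phi> n x - u x) - (\<psi> n x - v x))) \<longlonglongrightarrow> 0"
    using L2 \<phi>(1) \<psi>(1) L2_test_fn[OF _ \<Omega>]
    by (intro L2norm_diff_tendsto_0[OF \<phi>(2) \<psi>(2)] L2_diff) auto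
  moreover have "(\<lambda>n. L2norm \<Omega> (\<lambda>x. (cgrad (\<phi> n) x - g x) - (cgrad (\<psi> n) x - h x))) \<longlonglongrightarrow> 0"
    using L2 \<phi>(1) \<psi>(1) L2_cgrad_test_fn[OF _ \<Omega>]
    by (intro L2norm_diff_tendsto_0[OF \<phi>(3) \<psi>(3)] L2_diff) auto
  moreover have "(\<lambda>x. (\<phi> n x - u x) - (\<psi> n x - v x)) = (\<lambda>x. (\<phi> n x - \<psi> n x) - (u x - v x))"
    and "(\<lambda>x. (cgrad (\<phi> n) x - g x) - (cgrad (\<psi> n) x - h x))
      = (\<lambda>x. cgrad (\<lambda>x. \<phi> n x - \<psi> n x) x - (g x - h x))" for n
    by (simp_all add: fun_eq_iff algebra_simps
        cgrad_diff[OF test_fn_smooth[OF \<phi>(1)] test_fn_smooth[OF \<psi>(1)]])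
  ultimately have
    "(\<lambda>n. L2norm \<Omega> (\<lambda>x. (\<phi> n x - \<psi> n x) - (u x - v x))) \<longlonglongrightarrow> 0"
    "(\<lambda>n. L2norm \<Omega> (\<lambda>x. cgrad (\<lambda>x. \<phi> n x - \<psi> n x) x - (g x - h x))) \<longlonglongrightarrow> 0"
    by simp_all
  moreover have "is_wgrad \<Omega> (\<lambda>x. u x - v x) (\<lambda>x. g x - h x)"
    using u v L2 by (intro is_wgrad_diff \<Omega>) (auto simp: H10_def)
  ultimately show ?thesis
    unfolding H10_def using L2 \<phi>(1) \<psi>(1)
    by (intro conjI L2_diff exI[of _ "\<lambda>n x. \<phi> n x - \<psi> n x"] test_fn_diff allI) auto
qed

lemma Hdiv_diff:
  assumes \<Omega>: "\<Omega> \<in> sets lebesgue" and p: "Hdiv \<Omega> p dp" and q: "Hdiv \<Omega> q dq"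
  shows "Hdiv \<Omega> (\<lambda>x. p x - q x) (\<lambda>x. dp x - dq x)"
proof -
  have L2: "L2 \<Omega> p" "L2 \<Omega> q" "L2 \<Omega> dp" "L2 \<Omega> dq" using p q unfolding Hdiv_def by auto
  have "is_wdiv \<Omega> (\<lambda>x. p x - q x) (\<lambda>x. dp x - dq x)"
    unfolding is_wdiv_def
  proof (intro allI impI)
    fix \<zeta> assume \<zeta>: "test_fn \<Omega> \<zeta>"
    have int: "integrable (lebesgue_on \<Omega>) (\<lambda>x. \<Sum>i\<in>UNIV. w x $ i * pderiv_fn i \<zeta> x)" if "L2 \<Omega> w" for w
      by (intro Bochner_Integration.integrable_sum integrable_mult_L2 L2_vec_nth that
          L2_pderiv_fn_test_fn[OF \<zeta> \<Omega>])
    note int' = integrable_mult_L2[OF _ L2_test_fn[OF \<zeta> \<Omega>]]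
    have "(LINT x|lebesgue_on \<Omega>. (\<Sum>i\<in>UNIV. (p x - q x) $ i * pderiv_fn i \<zeta> x))
        = (LINT x|lebesgue_on \<Omega>. (\<Sum>i\<in>UNIV. p x $ i * pderiv_fn i \<zeta> x))
          - (LINT x|lebesgue_on \<Omega>. (\<Sum>i\<in>UNIV. q x $ i * pderiv_fn i \<zeta> x))"
      using int[OF L2(1)] int[OF L2(2)] by (simp add: left_diff_distrib sum_subtractf)
    also have "\<dots> = (LINT x|lebesgue_on \<Omega>. dq x * \<zeta> x) - (LINT x|lebesgue_on \<Omega>. dp x * \<zeta> x)"
      using p q \<zeta> unfolding Hdiv_def is_wdiv_def by simp
    also have "\<dots> = - (LINT x|lebesgue_on \<Omega>. (dp x - dq x) * \<zeta> x)"
      using int'[OF L2(3)] int'[OF L2(4)] by (simp add: left_diff_distrib)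
    finally show "(LINT x|lebesgue_on \<Omega>. (\<Sum>i\<in>UNIV. (p x - q x) $ i * pderiv_fn i \<zeta> x))
        = - (LINT x|lebesgue_on \<Omega>. (dp x - dq x) * \<zeta> x)" .
  qed
  thus ?thesis unfolding Hdiv_def using L2 by (simp add: L2_diff)
qed

lemma integral_tendsto_L2_bound:
  fixes F :: "nat \<Rightarrow> _ \<Rightarrow> complex"
  assumes "\<And>n. integrable (lebesgue_on \<Omega>) (F n)" "integrable (lebesgue_on \<Omega>) G"
    and "\<And>n. norm (LINT x|lebesgue_on \<Omega>. F n x - G x) \<le> C * e n" "e \<longlonglongrightarrow> 0"
  shows "(\<lambda>n. LINT x|lebesgue_on \<Omega>. F n x) \<longlonglongrightarrow> (LINT x|lebesgue_on \<Omega>. G x)"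
proof -
  have "(\<lambda>n. (LINT x|lebesgue_on \<Omega>. F n x) - (LINT x|lebesgue_on \<Omega>. G x)) \<longlonglongrightarrow> 0"
  proof (rule Lim_null_comparison)
    show "\<forall>\<^sub>F n in sequentially. norm ((LINT x|lebesgue_on \<Omega>. F n x) - (LINT x|lebesgue_on \<Omega>. G x)) \<le> C * e n"
      using assms(3) by (simp add: Bochner_Integration.integral_diff[OF assms(1,2), symmetric])
    show "(\<lambda>n. C * e n) \<longlonglongrightarrow> 0" using tendsto_mult_right_zero[OF assms(4)] .
  qed
  thus ?thesis by (rule LIM_zero_cancel)
qed

text \<open>Green's formula \<open>(q, \<nabla>u) = -(div q, u)\<close>: it holds for test functions \<open>u\<close> by the
  definition of the weak divergence, and passes to the \<open>H\<^sup>1\<close>-limit.\<close>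

lemma green_formula:
  assumes \<Omega>: "\<Omega> \<in> sets lebesgue" and u: "H10 \<Omega> u g" and q: "Hdiv \<Omega> q dq"
  shows "L2inner \<Omega> q g = - (LINT x|lebesgue_on \<Omega>. dq x * cnj (u x))"
proof -
  have L2: "L2 \<Omega> u" "L2 \<Omega> g" "L2 \<Omega> q" "L2 \<Omega> dq" using u q unfolding H10_def Hdiv_def by auto
  from u obtain \<phi> where \<phi>: "\<And>n. test_fn \<Omega> (\<phi> n)" "(\<lambda>n. L2norm \<Omega> (\<lambda>x. \<phi> n x - u x)) \<longlonglongrightarrow> 0"
    "(\<lambda>n. L2norm \<Omega> (\<lambda>x. cgrad (\<phi> n) x - g x)) \<longlonglongrightarrow> 0" unfolding H10_def by blast
  note \<phi>L2 = L2_test_fn[OF \<phi>(1) \<Omega>] L2_cgrad_test_fn[OF \<phi>(1) \<Omega>]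
  have test: "L2inner \<Omega> q (cgrad (\<phi> n)) = - (LINT x|lebesgue_on \<Omega>. dq x * cnj (\<phi> n x))" for n
  proof -
    have "(LINT x|lebesgue_on \<Omega>. (\<Sum>i\<in>UNIV. q x $ i * pderiv_fn i (\<lambda>x. cnj (\<phi> n x)) x))
        = - (LINT x|lebesgue_on \<Omega>. dq x * cnj (\<phi> n x))"
      using q test_fn_cnj[OF \<phi>(1)] unfolding Hdiv_def is_wdiv_def by blast
    thus ?thesis
      unfolding L2inner_def cinner_def cgrad_def by (simp add: pderiv_fn_cnj[OF test_fn_smooth[OF \<phi>(1)]])
  qed
  have "(\<lambda>n. L2inner \<Omega> q (cgrad (\<phi> n))) \<longlonglongrightarrow> L2inner \<Omega> q g"
    unfolding L2inner_def
  proof (rule integral_tendsto_L2_bound[OF integrable_cinner[OF L2(3) \<phi>L2(2)]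
        integrable_cinner[OF L2(3) L2(2)] _ \<phi>(3)])
    show "norm (LINT x|lebesgue_on \<Omega>. cinner (q x) (cgrad (\<phi> n) x) - cinner (q x) (g x))
        \<le> L2norm \<Omega> q * L2norm \<Omega> (\<lambda>x. cgrad (\<phi> n) x - g x)" for n
      using norm_L2inner_le[OF L2(3) L2_diff[OF \<phi>L2(2) L2(2)]]
      by (simp add: L2inner_def cinner_diff_right)
  qed
  moreover have "(\<lambda>n. LINT x|lebesgue_on \<Omega>. dq x * cnj (\<phi> n x)) \<longlonglongrightarrow> (LINT x|lebesgue_on \<Omega>. dq x * cnj (u x))"
  proof (rule integral_tendsto_L2_bound[OF integrable_mult_cnj[OF L2(4) \<phi>L2(1)]
        integrable_mult_cnj[OF L2(4) L2(1)] _ \<phi>(2)])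
    show "norm (LINT x|lebesgue_on \<Omega>. dq x * cnj (\<phi> n x) - dq x * cnj (u x))
        \<le> L2norm \<Omega> dq * L2norm \<Omega> (\<lambda>x. \<phi> n x - u x)" for n
      using norm_integral_mult_cnj_le[OF L2(4) L2_diff[OF \<phi>L2(1) L2(1)]]
      by (simp add: right_diff_distrib)
  qed
  ultimately show ?thesis
    unfolding test by (rule LIMSEQ_unique[OF _ tendsto_minus])
qed

section \<open>Pointwise ellipticity\<close>

lemma AE_nonneg_if_integrals_on_bounded_sets_nonneg:
  fixes h :: "'a::euclidean_space \<Rightarrow> real"
  assumes h: "h \<in> borel_measurable (lebesgue_on \<Omega>)"
    and int: "\<And>T. T \<in> sets (lebesgue_on \<Omega>) \<Longrightarrow> bounded T \<Longrightarrow>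
      integrable (lebesgue_on \<Omega>) (\<lambda>x. indicator T x * h x)
      \<and> 0 \<le> (LINT x|lebesgue_on \<Omega>. indicator T x * h x)"
  shows "AE x in lebesgue_on \<Omega>. 0 \<le> h x"
proof -
  let ?M = "lebesgue_on \<Omega>"
  define T where "T n = {x \<in> space ?M. h x < 0 \<and> norm x \<le> real n}" for n :: nat
  have "AE x in ?M. x \<notin> T n" for n
  proof -
    have "(\<lambda>x. x) \<in> borel_measurable ?M"
      by (intro measurable_restrict_space1 measurable_completion measurable_ident_sets) simp
    hence T: "T n \<in> sets ?M" unfolding T_def using h by measurable
    have "bounded (T n)" unfolding T_def bounded_iff by auto
    with int[OF T] have i: "integrable ?M (\<lambda>x. - (indicator (T n) x * h x))"
      and le: "(LINT x|?M. - (indicator (T n) x * h x)) \<le> 0" by auto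
    have nonneg: "0 \<le> - (indicator (T n) x * h x)" for x
      by (auto simp: T_def indicator_def)
    hence "(LINT x|?M. - (indicator (T n) x * h x)) = 0"
      using le integral_nonneg_AE[of "\<lambda>x. - (indicator (T n) x * h x)" ?M] by auto
    hence "AE x in ?M. - (indicator (T n) x * h x) = 0"
      using integral_nonneg_eq_0_iff_AE[OF i] nonneg by auto
    thus ?thesis by eventually_elim (auto simp: T_def indicator_def)
  qed
  hence "AE x in ?M. \<forall>n. x \<notin> T n" by (simp add: AE_all_countable)
  with AE_space show ?thesis
  proof eventually_elim
    case (elim x)
    show ?case
      using elim(1) elim(2)[rule_format, of "nat \<lceil>norm x\<rceil>"] real_nat_ceiling_ge[of "norm x"]
      by (auto simp: T_def)
  qed
qed

text \<open>Test the integral ellipticity with \<open>\<phi> = 1\<^sub>T v\<close> for bounded measurable \<open>T\<close>.\<close>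

lemma AE_elliptic_fixed_vector:
  fixes A :: "real^'d \<Rightarrow> complex^'d^'d"
  assumes \<Omega>: "\<Omega> \<in> sets lebesgue" and A: "A \<in> borel_measurable (lebesgue_on \<Omega>)"
    and A_bdd: "AE x in lebesgue_on \<Omega>. norm (A x) \<le> K"
    and A_ell: "\<forall>\<phi>::real^'d \<Rightarrow> complex^'d. L2 \<Omega> \<phi> \<longrightarrow>
        \<alpha> * (L2norm \<Omega> \<phi>)\<^sup>2 \<le> Re (L2inner \<Omega> (\<lambda>x. A x *v \<phi> x) \<phi>)"
  shows "AE x in lebesgue_on \<Omega>. \<alpha> * (norm v)\<^sup>2 \<le> Re (cinner (A x *v v) v)"
proof -
  let ?M = "lebesgue_on \<Omega>"
  let ?q = "\<lambda>x. Re (cinner (A x *v v) v)"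
  have "AE x in ?M. 0 \<le> ?q x - \<alpha> * (norm v)\<^sup>2"
  proof (rule AE_nonneg_if_integrals_on_bounded_sets_nonneg)
    show "(\<lambda>x. ?q x - \<alpha> * (norm v)\<^sup>2) \<in> borel_measurable ?M"
      using A by measurable
    fix T assume T: "T \<in> sets ?M" and "bounded T"
    have "T \<in> sets lebesgue" using T \<Omega> by (simp add: sets_restrict_space_iff)
    hence "T \<in> lmeasurable" using \<open>bounded T\<close> by (intro bounded_set_imp_lmeasurable)
    hence "emeasure lebesgue T \<noteq> top" by (rule fmeasurableD2)
    moreover have "emeasure ?M T = emeasure lebesgue T"
      using T \<Omega> by (intro emeasure_restrict_space) (auto simp: sets_restrict_space_iff)
    ultimately have "emeasure ?M T < \<infinity>" by (metis infinity_ennreal_def less_top)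
    hence iT: "integrable ?M (indicat_real T)" by (rule integrable_real_indicator[OF T])
    define \<phi> where "\<phi> x = indicator T x *\<^sub>R v" for x
    have norm_\<phi>: "(norm (\<phi> x))\<^sup>2 = indicator T x * (norm v)\<^sup>2" for x
      by (simp add: \<phi>_def indicator_def)
    have "L2 \<Omega> \<phi>"
      unfolding L2_def norm_\<phi> using T iT by (simp add: \<phi>_def[abs_def])
    hence "integrable ?M (\<lambda>x. cinner (A x *v \<phi> x) (\<phi> x))"
      and ell: "\<alpha> * (L2norm \<Omega> \<phi>)\<^sup>2 \<le> Re (L2inner \<Omega> (\<lambda>x. A x *v \<phi> x) \<phi>)"
      using A_ell integrable_cinner[OF L2_matrix_vector_mult[OF A A_bdd]] by auto
    moreover have "(\<lambda>x. cinner (A x *v \<phi> x) (\<phi> x)) = (\<lambda>x. indicator T x * cinner (A x *v v) v)"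
      by (simp add: fun_eq_iff \<phi>_def indicator_def)
    ultimately have i: "integrable ?M (\<lambda>x. indicator T x * cinner (A x *v v) v)"
      and "\<alpha> * (LINT x|?M. indicator T x * (norm v)\<^sup>2)
        \<le> Re (LINT x|?M. indicator T x * cinner (A x *v v) v)"
      unfolding L2norm_power2 norm_\<phi> L2inner_def by simp_all
    moreover have "(\<lambda>x. Re (indicator T x * cinner (A x *v v) v)) = (\<lambda>x. indicator T x * ?q x)"
      by (simp add: fun_eq_iff indicator_def)
    ultimately have iq: "integrable ?M (\<lambda>x. indicator T x * ?q x)"
      and "\<alpha> * (LINT x|?M. indicator T x * (norm v)\<^sup>2) \<le> (LINT x|?M. indicator T x * ?q x)"
      using integrable_Re[OF i] integral_Re[OF i] by simp_all
    moreover have "integrable ?M (\<lambda>x. indicator T x * (\<alpha> * (norm v)\<^sup>2))"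
      using iT by simp
    ultimately show "integrable ?M (\<lambda>x. indicator T x * (?q x - \<alpha> * (norm v)\<^sup>2))
        \<and> 0 \<le> (LINT x|?M. indicator T x * (?q x - \<alpha> * (norm v)\<^sup>2))"
      by (simp add: right_diff_distrib mult_ac)
  qed
  thus ?thesis by simp
qed

lemma AE_elliptic_pointwise:
  fixes A :: "real^'d \<Rightarrow> complex^'d^'d"
  assumes "\<Omega> \<in> sets lebesgue" "A \<in> borel_measurable (lebesgue_on \<Omega>)"
    and "AE x in lebesgue_on \<Omega>. norm (A x) \<le> K"
    and "\<forall>\<phi>::real^'d \<Rightarrow> complex^'d. L2 \<Omega> \<phi> \<longrightarrow>
        \<alpha> * (L2norm \<Omega> \<phi>)\<^sup>2 \<le> Re (L2inner \<Omega> (\<lambda>x. A x *v \<phi> x) \<phi>)"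
  shows "AE x in lebesgue_on \<Omega>. \<forall>v. \<alpha> * (norm v)\<^sup>2 \<le> Re (cinner (A x *v v) v)"
proof -
  obtain D :: "(complex^'d) set" where "countable D"
    and D: "\<And>X. open X \<Longrightarrow> X \<noteq> {} \<Longrightarrow> \<exists>d\<in>D. d \<in> X"
    by (rule countable_dense_setE) blast
  hence "AE x in lebesgue_on \<Omega>. \<forall>v\<in>D. \<alpha> * (norm v)\<^sup>2 \<le> Re (cinner (A x *v v) v)"
    using AE_elliptic_fixed_vector[OF assms] by (simp add: AE_ball_countable)
  thus ?thesis
  proof eventually_elim
    case (elim x)
    have "open {v. \<not> \<alpha> * (norm v)\<^sup>2 \<le> Re (cinner (A x *v v) v)}"
      unfolding not_le by (intro open_Collect_less continuous_on_quadratic_form continuous_intros)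
    thus ?case using D elim by fastforce
  qed
qed

section \<open>Weighted norms for a uniformly elliptic coefficient\<close>

lemma L2norm_cong_AE:
  assumes "L2 \<Omega> f" "L2 \<Omega> g" "AE x in lebesgue_on \<Omega>. norm (f x) = norm (g x)"
  shows "L2norm \<Omega> f = L2norm \<Omega> g"
  unfolding L2norm_def using assms by (auto simp: L2_def intro!: arg_cong[where f = sqrt] integral_cong_AE)

lemma wnorm2_eq_integral_Re:
  assumes "integrable (lebesgue_on \<Omega>) (\<lambda>x. cinner (\<gamma> x *v v x) (v x))"
  shows "wnorm2 \<Omega> \<gamma> v = (LINT x|lebesgue_on \<Omega>. Re (cinner (\<gamma> x *v v x) (v x)))"
  unfolding wnorm2_def L2inner_def by (rule integral_Re[OF assms, symmetric])

locale elliptic_coefficient =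
  fixes \<Omega> :: "(real^'d) set" and A :: "real^'d \<Rightarrow> complex^'d^'d" and \<alpha> K :: real
  assumes measurable_A: "A \<in> borel_measurable (lebesgue_on \<Omega>)"
    and bounded_A: "AE x in lebesgue_on \<Omega>. norm (A x) \<le> K"
    and elliptic_A: "AE x in lebesgue_on \<Omega>. elliptic_hermitian (A x) \<alpha>"
begin

lemma integrable_form:
  "L2 \<Omega> v \<Longrightarrow> integrable (lebesgue_on \<Omega>) (\<lambda>x. cinner (A x *v v x) (v x))"
  by (rule integrable_cinner[OF L2_matrix_vector_mult[OF measurable_A bounded_A]])

lemma integrable_inverse_form:
  assumes v: "L2 \<Omega> v"
  shows "integrable (lebesgue_on \<Omega>) (\<lambda>x. cinner (matrix_inv (A x) *v v x) (v x))"
proof (rule Bochner_Integration.integrable_bound)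
  show "integrable (lebesgue_on \<Omega>) (\<lambda>x. (norm (v x))\<^sup>2 / \<alpha>)"
    using v by (simp add: L2_def)
  show "(\<lambda>x. cinner (matrix_inv (A x) *v v x) (v x)) \<in> borel_measurable (lebesgue_on \<Omega>)"
    using measurable_A L2_borel_measurable[OF v] by measurable
  show "AE x in lebesgue_on \<Omega>.
      norm (cinner (matrix_inv (A x) *v v x) (v x)) \<le> norm ((norm (v x))\<^sup>2 / \<alpha>)"
    using elliptic_A
    by eventually_elim (use elliptic_hermitian.norm_inverse_form_le elliptic_hermitian.pos in force)
qed

lemma wnorm2_inverse_nonneg:
  assumes "L2 \<Omega> v"
  shows "0 \<le> wnorm2 \<Omega> (\<lambda>x. matrix_inv (A x)) v"
  unfolding wnorm2_eq_integral_Re[OF integrable_inverse_form[OF assms]]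
  using elliptic_A by (intro integral_nonneg_AE) (auto elim: eventually_mono
      intro: elliptic_hermitian.inverse_form_nonneg)

lemma wnorm2_inverse_residual:
  assumes g: "L2 \<Omega> g" and d: "L2 \<Omega> d" and e: "L2 \<Omega> e"
    and e_eq: "AE x in lebesgue_on \<Omega>. e x = A x *v g x - d x"
  shows "wnorm2 \<Omega> (\<lambda>x. matrix_inv (A x)) e
    = wnorm2 \<Omega> A g + wnorm2 \<Omega> (\<lambda>x. matrix_inv (A x)) d - 2 * Re (L2inner \<Omega> d g)"
proof -
  let ?M = "lebesgue_on \<Omega>"
  note ie = integrable_Re[OF integrable_inverse_form[OF e]]
  note ig = integrable_Re[OF integrable_form[OF g]]
  note id = integrable_Re[OF integrable_inverse_form[OF d]]
  note idg = integrable_Re[OF integrable_cinner[OF d g]]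
  have "wnorm2 \<Omega> (\<lambda>x. matrix_inv (A x)) e = (LINT x|?M. Re (cinner (matrix_inv (A x) *v e x) (e x)))"
    by (rule wnorm2_eq_integral_Re[OF integrable_inverse_form[OF e]])
  also have "\<dots> = (LINT x|?M. Re (cinner (A x *v g x) (g x))
      + Re (cinner (matrix_inv (A x) *v d x) (d x)) - 2 * Re (cinner (d x) (g x)))"
  proof (rule integral_cong_AE)
    show "AE x in ?M. Re (cinner (matrix_inv (A x) *v e x) (e x)) = Re (cinner (A x *v g x) (g x))
        + Re (cinner (matrix_inv (A x) *v d x) (d x)) - 2 * Re (cinner (d x) (g x))"
      using elliptic_A e_eq by eventually_elim (simp add: elliptic_hermitian.inverse_form_residual)
  qed (use ie ig id idg in \<open>auto intro: borel_measurable_integrable\<close>)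
  also have "\<dots> = (LINT x|?M. Re (cinner (A x *v g x) (g x)))
      + (LINT x|?M. Re (cinner (matrix_inv (A x) *v d x) (d x)))
      - 2 * (LINT x|?M. Re (cinner (d x) (g x)))"
    using ig id idg by simp
  also have "\<dots> = wnorm2 \<Omega> A g + wnorm2 \<Omega> (\<lambda>x. matrix_inv (A x)) d - 2 * Re (L2inner \<Omega> d g)"
    using integrable_form[OF g] integrable_inverse_form[OF d] integrable_cinner[OF d g]
    by (simp add: wnorm2_eq_integral_Re L2inner_def)
  finally show ?thesis .
qed

lemma wnorm2_inverse_residual_le:
  assumes g: "L2 \<Omega> g" and d: "L2 \<Omega> d" and e: "L2 \<Omega> e"
    and e_eq: "AE x in lebesgue_on \<Omega>. e x = A x *v g x - d x"
  shows "wnorm2 \<Omega> (\<lambda>x. matrix_inv (A x)) e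
    \<le> 2 * wnorm2 \<Omega> A g + 2 * wnorm2 \<Omega> (\<lambda>x. matrix_inv (A x)) d"
proof -
  let ?M = "lebesgue_on \<Omega>"
  note ig = integrable_Re[OF integrable_form[OF g]]
  note id = integrable_Re[OF integrable_inverse_form[OF d]]
  have "(LINT x|?M. Re (cinner (matrix_inv (A x) *v e x) (e x)))
      \<le> (LINT x|?M. 2 * Re (cinner (A x *v g x) (g x)) + 2 * Re (cinner (matrix_inv (A x) *v d x) (d x)))"
  proof (rule integral_mono_AE)
    show "AE x in ?M. Re (cinner (matrix_inv (A x) *v e x) (e x))
        \<le> 2 * Re (cinner (A x *v g x) (g x)) + 2 * Re (cinner (matrix_inv (A x) *v d x) (d x))"
      using elliptic_A e_eq
      by eventually_elim (metis elliptic_hermitian.inverse_form_diff_le elliptic_hermitian.inverse_form_image)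
  qed (use integrable_Re[OF integrable_inverse_form[OF e]] ig id in auto)
  also have "\<dots> = 2 * wnorm2 \<Omega> A g + 2 * wnorm2 \<Omega> (\<lambda>x. matrix_inv (A x)) d"
    using ig id integrable_form[OF g] integrable_inverse_form[OF d] by (simp add: wnorm2_eq_integral_Re)
  finally show ?thesis
    by (simp add: wnorm2_eq_integral_Re[OF integrable_inverse_form[OF e]])
qed

text \<open>Green's formula turns the cross term of the expansion into the equilibrium residual.\<close>

lemma
  assumes \<Omega>: "\<Omega> \<in> sets lebesgue" and u: "H10 \<Omega> u gu" and p: "Hdiv \<Omega> p dp"
    and p_eq: "AE x in lebesgue_on \<Omega>. p x = A x *v gu x"
    and div_eq: "AE x in lebesgue_on \<Omega>. - dp x = f x" and f: "L2 \<Omega> f"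
    and ut: "H10 \<Omega> ut gut" and pt: "Hdiv \<Omega> pt dpt"
  shows residual_identity: "wnorm2 \<Omega> (\<lambda>x. matrix_inv (A x)) (\<lambda>x. pt x - A x *v gut x)
      = wnorm2 \<Omega> A (\<lambda>x. gu x - gut x) + wnorm2 \<Omega> (\<lambda>x. matrix_inv (A x)) (\<lambda>x. p x - pt x)
        - 2 * Re (LINT x|lebesgue_on \<Omega>. (f x + dpt x) * cnj (u x - ut x))"
    and residual_le: "wnorm2 \<Omega> (\<lambda>x. matrix_inv (A x)) (\<lambda>x. pt x - A x *v gut x)
      \<le> 2 * wnorm2 \<Omega> A (\<lambda>x. gu x - gut x) + 2 * wnorm2 \<Omega> (\<lambda>x. matrix_inv (A x)) (\<lambda>x. p x - pt x)"
proof -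
  have L2: "L2 \<Omega> u" "L2 \<Omega> ut" "L2 \<Omega> gu" "L2 \<Omega> gut" "L2 \<Omega> p" "L2 \<Omega> pt" "L2 \<Omega> dp" "L2 \<Omega> dpt"
    using u ut p pt unfolding H10_def Hdiv_def by auto
  have gw: "L2 \<Omega> (\<lambda>x. gu x - gut x)" and d: "L2 \<Omega> (\<lambda>x. p x - pt x)"
    and e: "L2 \<Omega> (\<lambda>x. pt x - A x *v gut x)"
    by (intro L2_diff L2 L2_matrix_vector_mult[OF measurable_A bounded_A])+
  have e_eq: "AE x in lebesgue_on \<Omega>. pt x - A x *v gut x = A x *v (gu x - gut x) - (p x - pt x)"
    using p_eq by eventually_elim (simp add: matrix_vector_mult_diff_distrib)
  have "L2inner \<Omega> (\<lambda>x. p x - pt x) (\<lambda>x. gu x - gut x)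
      = - (LINT x|lebesgue_on \<Omega>. (dp x - dpt x) * cnj (u x - ut x))"
    by (rule green_formula[OF \<Omega> H10_diff[OF \<Omega> u ut] Hdiv_diff[OF \<Omega> p pt]])
  also have "\<dots> = (LINT x|lebesgue_on \<Omega>. (f x + dpt x) * cnj (u x - ut x))"
    unfolding integral_minus[symmetric]
  proof (rule integral_cong_AE)
    have "AE x in lebesgue_on \<Omega>. f x = - dp x" using div_eq by eventually_elim simp
    thus "AE x in lebesgue_on \<Omega>. - ((dp x - dpt x) * cnj (u x - ut x)) = (f x + dpt x) * cnj (u x - ut x)"
      by eventually_elim (simp add: algebra_simps)
  qed (use integrable_mult_cnj[OF L2_diff[OF L2(7,8)] L2_diff[OF L2(1,2)]]
      integrable_mult_cnj[OF L2_add[OF f L2(8)] L2_diff[OF L2(1,2)]]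
      in \<open>auto intro: borel_measurable_integrable\<close>)
  finally show "wnorm2 \<Omega> (\<lambda>x. matrix_inv (A x)) (\<lambda>x. pt x - A x *v gut x)
      = wnorm2 \<Omega> A (\<lambda>x. gu x - gut x) + wnorm2 \<Omega> (\<lambda>x. matrix_inv (A x)) (\<lambda>x. p x - pt x)
        - 2 * Re (LINT x|lebesgue_on \<Omega>. (f x + dpt x) * cnj (u x - ut x))"
    using wnorm2_inverse_residual[OF gw d e e_eq] by simp
  show "wnorm2 \<Omega> (\<lambda>x. matrix_inv (A x)) (\<lambda>x. pt x - A x *v gut x)
      \<le> 2 * wnorm2 \<Omega> A (\<lambda>x. gu x - gut x) + 2 * wnorm2 \<Omega> (\<lambda>x. matrix_inv (A x)) (\<lambda>x. p x - pt x)"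
    by (rule wnorm2_inverse_residual_le[OF gw d e e_eq])
qed

end

lemma elliptic_coefficientI:
  fixes A :: "real^'d \<Rightarrow> complex^'d^'d"
  assumes \<Omega>: "\<Omega> \<in> sets lebesgue" and A: "A \<in> borel_measurable (lebesgue_on \<Omega>)"
    and K: "AE x in lebesgue_on \<Omega>. norm (A x) \<le> K"
    and herm: "\<forall>x\<in>\<Omega>. \<forall>i j. A x $ i $ j = cnj (A x $ j $ i)" and "0 < \<alpha>"
    and ell: "\<forall>\<phi>::real^'d \<Rightarrow> complex^'d. L2 \<Omega> \<phi> \<longrightarrow>
        \<alpha> * (L2norm \<Omega> \<phi>)\<^sup>2 \<le> Re (L2inner \<Omega> (\<lambda>x. A x *v \<phi> x) \<phi>)"
  shows "elliptic_coefficient \<Omega> A \<alpha> K"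
proof
  from AE_space AE_elliptic_pointwise[OF \<Omega> A K ell]
  show "AE x in lebesgue_on \<Omega>. elliptic_hermitian (A x) \<alpha>"
  proof eventually_elim
    case (elim x)
    hence "x \<in> \<Omega>" by simp
    hence "\<forall>i j. A x $ i $ j = cnj (A x $ j $ i)" using herm by blast
    with elim \<open>0 < \<alpha>\<close> show ?case unfolding elliptic_hermitian_def by blast
  qed
qed (fact A K)+

lemma Re_integral_mult_cnj_le:
  assumes "L2 \<Omega> r" "L2 \<Omega> w" "L2norm \<Omega> w \<le> B"
  shows "Re (LINT x|lebesgue_on \<Omega>. r x * cnj (w x)) \<le> L2norm \<Omega> r * B"
proof -
  have "Re (LINT x|lebesgue_on \<Omega>. r x * cnj (w x)) \<le> norm (LINT x|lebesgue_on \<Omega>. r x * cnj (w x))"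
    by (rule complex_Re_le_cmod)
  also have "\<dots> \<le> L2norm \<Omega> r * L2norm \<Omega> w"
    by (rule norm_integral_mult_cnj_le[OF assms(1,2)])
  also have "\<dots> \<le> L2norm \<Omega> r * B"
    using assms(3) by (intro mult_left_mono L2norm_nonneg)
  finally show ?thesis .
qed

lemma L2norm_div_error_eq_residual:
  fixes dp dpt f :: "_ \<Rightarrow> 'b::{real_normed_vector, second_countable_topology}"
  assumes "L2 \<Omega> dp" "L2 \<Omega> dpt" "L2 \<Omega> f" "AE x in lebesgue_on \<Omega>. - dp x = f x"
  shows "L2norm \<Omega> (\<lambda>x. dp x - dpt x) = L2norm \<Omega> (\<lambda>x. f x + dpt x)"
proof (rule L2norm_cong_AE)
  show "AE x in lebesgue_on \<Omega>. norm (dp x - dpt x) = norm (f x + dpt x)"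
    using assms(4)
  proof eventually_elim
    case (elim x)
    hence "f x = - dp x" by simp
    hence "f x + dpt x = - (dp x - dpt x)" by simp
    thus ?case by (simp only: norm_minus_cancel)
  qed
qed (fact L2_diff[OF assms(1,2)] L2_add[OF assms(3,2)])+

lemma two_sided_bound_arith:
  fixes Qe Qg Qd X \<rho> G C \<alpha> :: real
  assumes "\<alpha> > 0" and lower: "Qe \<le> 2 * Qg + 2 * Qd" and ident: "Qe = Qg + Qd - 2 * X"
    and X: "X \<le> \<rho> * (C * G)" and ell: "\<alpha> * G\<^sup>2 \<le> Qg" and "0 \<le> Qd"
  shows "(1/2) * Qe + \<rho>\<^sup>2 \<le> Qg + Qd + \<rho>\<^sup>2"
    and "Qg + Qd + \<rho>\<^sup>2 \<le> 2 * Qe + (1 + 4 * C\<^sup>2 / \<alpha>) * \<rho>\<^sup>2"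
proof -
  show "(1/2) * Qe + \<rho>\<^sup>2 \<le> Qg + Qd + \<rho>\<^sup>2" using lower by simp
  have "(\<rho> * C) * G \<le> ((2 / \<alpha>) * (\<rho> * C)\<^sup>2 + G\<^sup>2 / (2 / \<alpha>)) / 2"
    by (rule young_ineq) (use \<open>\<alpha> > 0\<close> in simp)
  also have "\<dots> = C\<^sup>2 * \<rho>\<^sup>2 / \<alpha> + \<alpha> * G\<^sup>2 / 4"
    using \<open>\<alpha> > 0\<close> by (simp add: field_simps power_mult_distrib)
  finally have "Qg + Qd \<le> Qe + 2 * (C\<^sup>2 * \<rho>\<^sup>2 / \<alpha>) + Qg / 2"
    using ident X ell by (simp add: mult_ac)
  thus "Qg + Qd + \<rho>\<^sup>2 \<le> 2 * Qe + (1 + 4 * C\<^sup>2 / \<alpha>) * \<rho>\<^sup>2"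
    using \<open>0 \<le> Qd\<close> by (simp add: field_simps)
qed

theorem corollary4p2:
  fixes \<Omega> :: "(real^'d) set"
    and A :: "real^'d \<Rightarrow> complex^'d^'d"
    and \<alpha> \<beta> C\<^sub>F :: real
    and f u ut :: "real^'d \<Rightarrow> complex"
    and gu gut p pt :: "real^'d \<Rightarrow> complex^'d"
    and dp dpt :: "real^'d \<Rightarrow> complex"
  assumes "open \<Omega>" and "connected \<Omega>"
    and A_meas: "A \<in> borel_measurable (lebesgue_on \<Omega>)"
    and A_bdd: "\<exists>M. AE x in lebesgue_on \<Omega>. norm (A x) \<le> M"
    and A_herm: "\<forall>x\<in>\<Omega>. \<forall>i j. A x $ i $ j = cnj (A x $ j $ i)"
    and "0 < \<alpha>" and "\<alpha> \<le> \<beta>"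
    and A_ell: "\<forall>\<phi>::real^'d \<Rightarrow> complex^'d. L2 \<Omega> \<phi> \<longrightarrow>
        \<alpha> * (L2norm \<Omega> \<phi>)\<^sup>2 \<le> Re (L2inner \<Omega> (\<lambda>x. A x *v \<phi> x) \<phi>)
        \<and> Re (L2inner \<Omega> (\<lambda>x. A x *v \<phi> x) \<phi>) \<le> \<beta> * (L2norm \<Omega> \<phi>)\<^sup>2"
    and f_L2: "L2 \<Omega> f"
    and friedrichs: "\<forall>w gw. H10 \<Omega> w gw \<longrightarrow> L2norm \<Omega> w \<le> C\<^sub>F * L2norm \<Omega> gw"
    and u: "H10 \<Omega> u gu" and p: "Hdiv \<Omega> p dp"
    and p_eq: "AE x in lebesgue_on \<Omega>. p x = A x *v gu x"
    and div_eq: "AE x in lebesgue_on \<Omega>. - dp x = f x"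
    and ut: "H10 \<Omega> ut gut" and pt: "Hdiv \<Omega> pt dpt"
  shows "((1/2) * wnorm2 \<Omega> (\<lambda>x. matrix_inv (A x)) (\<lambda>x. pt x - A x *v gut x)
           + (L2norm \<Omega> (\<lambda>x. f x + dpt x))\<^sup>2
         \<le> wnorm2 \<Omega> A (\<lambda>x. gu x - gut x)
           + wnorm2 \<Omega> (\<lambda>x. matrix_inv (A x)) (\<lambda>x. p x - pt x)
           + (L2norm \<Omega> (\<lambda>x. dp x - dpt x))\<^sup>2)
       \<and> (wnorm2 \<Omega> A (\<lambda>x. gu x - gut x)
           + wnorm2 \<Omega> (\<lambda>x. matrix_inv (A x)) (\<lambda>x. p x - pt x)
           + (L2norm \<Omega> (\<lambda>x. dp x - dpt x))\<^sup>2
         \<le> 2 * wnorm2 \<Omega> (\<lambda>x. matrix_inv (A x)) (\<lambda>x. pt x - A x *v gut x)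
           + (1 + 4 * C\<^sub>F\<^sup>2 / \<alpha>) * (L2norm \<Omega> (\<lambda>x. f x + dpt x))\<^sup>2)"
proof -
  have \<Omega>: "\<Omega> \<in> sets lebesgue" using \<open>open \<Omega>\<close> by (simp add: borel_open sets_completionI_sets)
  obtain K where K: "AE x in lebesgue_on \<Omega>. norm (A x) \<le> K" using A_bdd by blast
  interpret elliptic_coefficient \<Omega> A \<alpha> K
    using A_ell by (intro elliptic_coefficientI[OF \<Omega> A_meas K A_herm \<open>0 < \<alpha>\<close>]) blast
  have L2: "L2 \<Omega> u" "L2 \<Omega> ut" "L2 \<Omega> gu" "L2 \<Omega> gut" "L2 \<Omega> p" "L2 \<Omega> pt" "L2 \<Omega> dp" "L2 \<Omega> dpt"
    using u ut p pt unfolding H10_def Hdiv_def by auto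
  have "Re (LINT x|lebesgue_on \<Omega>. (f x + dpt x) * cnj (u x - ut x))
      \<le> L2norm \<Omega> (\<lambda>x. f x + dpt x) * (C\<^sub>F * L2norm \<Omega> (\<lambda>x. gu x - gut x))"
    using friedrichs H10_diff[OF \<Omega> u ut]
    by (intro Re_integral_mult_cnj_le L2_add[OF f_L2 L2(8)] L2_diff[OF L2(1,2)]) blast
  moreover have "\<alpha> * (L2norm \<Omega> (\<lambda>x. gu x - gut x))\<^sup>2 \<le> wnorm2 \<Omega> A (\<lambda>x. gu x - gut x)"
    using A_ell L2_diff[OF L2(3,4)] unfolding wnorm2_def by blast
  ultimately show ?thesis
    using two_sided_bound_arith[OF \<open>0 < \<alpha>\<close> residual_le[OF \<Omega> u p p_eq div_eq f_L2 ut pt]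
        residual_identity[OF \<Omega> u p p_eq div_eq f_L2 ut pt]] wnorm2_inverse_nonneg[OF L2_diff[OF L2(5,6)]]
      L2norm_div_error_eq_residual[OF L2(7,8) f_L2 div_eq]
    by simp
qed

end
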